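(* Let $F$ be a non-archimedean local field. For every $b\in B(\Gamma)^{\flat}$ there is a tropical curve $(\Gamma_b,w_b)$ such that there is a measure-preserving isomorphism $\mathsf{trop}(\pi^{-1}(b))\simeq J(\Gamma_b,w_b)$.
   Context: $\Gamma$ is a finite graph with edge set $E(\Gamma)$; $B(\Gamma)=\mathsf{Spec}\,\mathcal{O}_F[[T_e : e\in E(\Gamma)]]$, $\Delta\subset B(\Gamma)$ is the union of the divisors $(T_e)$, and $B(\Gamma)^{\flat}=B(\Gamma)(\mathcal{O}_F)\cap(B(\Gamma)\setminus\Delta)(F)$. $\pi\colon\mathfrak{V}(\Gamma,\eta)\to B(\Gamma)$ is the hypertoric Hitchin family (Mumford-type quotient of a GIT quotient of $\mathbb{W}^{E(\Gamma)}$ by the lattice $H_1(\Gamma,\mathbb{Z})$); for $b\in B(\Gamma)^{\flat}$ the fibre is the abelian $F$-variety $\pi^{-1}(b)=H^1(\Gamma,\mathbb{G}_{m})/\sigma_b(H_1(\Gamma,\mathbb{Z}))$, where $\sigma_b(\gamma)$ is the class of $(b_e^{\langle\gamma,e\rangle})_{e\in E(\Gamma)}$. For an abelian variety $A=\mathbb{G}_{m}^r/Y$ with $Y$ a discrete group, $\mathsf{trop}(A)=\mathbb{R}^r/\log|Y|$, with the measure induced by Lebesgue measure on $\mathbb{R}^r$. A tropical curve is a pair $(\Gamma,w)$ with $w\colon E(\Gamma)\to\mathbb{Q}_{>0}$; its Jacobian $J(\Gamma,w)$ is the cokernel of $\tau_w\colon H_1(\Gamma,\mathbb{Z})\to H^1(\Gamma,\mathbb{Z})$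 (taken as the torus $H^1(\Gamma,\mathbb{R})/\tau_w(H_1(\Gamma,\mathbb{Z}))$), where $\tau_w(\gamma)=\sum_{e}w(e)\langle\gamma,[e]\rangle[e]$. *)

theory Defs
  imports "HOL-Analysis.Analysis"
begin

definition valuation_ring :: "('f::field \<Rightarrow> real) \<Rightarrow> 'f set" where
  "valuation_ring av = {x. av x \<le> 1}"

definition maximal_ideal :: "('f::field \<Rightarrow> real) \<Rightarrow> 'f set" where
  "maximal_ideal av = {x. av x < 1}"

definition residue_field :: "('f::field \<Rightarrow> real) \<Rightarrow> 'f set set" where
  "residue_field av = valuation_ring av //
     {(x, y). x \<in> valuation_ring av \<and> y \<in> valuation_ring av \<and> av (x - y) < 1}"

definition residue_card :: "('f::field \<Rightarrow> real) \<Rightarrow> real" where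
  "residue_card av = real (card (residue_field av))"

text \<open>av is the normalised absolute value of a non-archimedean local field:
  multiplicative, ultrametric, complete, finite residue field of cardinality q,
  and value group of nonzero elements exactly q^Z (discrete, normalised).\<close>
definition nonarch_local_field :: "('f::field \<Rightarrow> real) \<Rightarrow> bool" where
  "nonarch_local_field av \<longleftrightarrow>
     (\<forall>x. 0 \<le> av x) \<and> (\<forall>x. av x = 0 \<longleftrightarrow> x = 0) \<and>
     (\<forall>x y. av (x * y) = av x * av y) \<and>
     (\<forall>x y. av (x + y) \<le> max (av x) (av y)) \<and>
     finite (residue_field av) \<and>
     av ` (UNIV - {0}) = range (\<lambda>k::int. residue_card av powr real_of_int k) \<and>
     (\<forall>s::nat \<Rightarrow> 'f. (\<forall>\<epsilon>>0. \<exists>N. \<forall>m\<ge>N. \<forall>n\<ge>N. av (s m - s n) < \<epsilon>) \<longrightarrow>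
        (\<exists>l. \<forall>\<epsilon>>0. \<exists>N. \<forall>n\<ge>N. av (s n - l) < \<epsilon>))"

text \<open>log|x| for the normalised absolute value, taken to base q (so log|x| = -v(x)).\<close>
definition loga :: "('f::field \<Rightarrow> real) \<Rightarrow> 'f \<Rightarrow> real" where
  "loga av x = log (residue_card av) (av x)"

text \<open>A finite (multi)graph with vertex set V, edge set E and an auxiliary orientation
  src/tgt (loops and multiple edges allowed).\<close>
definition finite_graph :: "'v set \<Rightarrow> 'e set \<Rightarrow> ('e \<Rightarrow> 'v) \<Rightarrow> ('e \<Rightarrow> 'v) \<Rightarrow> bool" where
  "finite_graph V E src tgt \<longleftrightarrow> finite V \<and> finite E \<and> (\<forall>e\<in>E. src e \<in> V \<and> tgt e \<in> V)"

text \<open>H_1(Gamma,Z): integer 1-chains (supported on E) with zero boundary;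
  the value c e is the pairing <c,e>.\<close>
definition H1 :: "'v set \<Rightarrow> 'e set \<Rightarrow> ('e \<Rightarrow> 'v) \<Rightarrow> ('e \<Rightarrow> 'v) \<Rightarrow> ('e \<Rightarrow> int) set" where
  "H1 V E src tgt = {c. (\<forall>e. e \<notin> E \<longrightarrow> c e = 0) \<and>
     (\<forall>v\<in>V. (\<Sum>e\<in>{e\<in>E. tgt e = v}. c e) = (\<Sum>e\<in>{e\<in>E. src e = v}. c e))}"

definition H1_basis :: "'v set \<Rightarrow> 'e set \<Rightarrow> ('e \<Rightarrow> 'v) \<Rightarrow> ('e \<Rightarrow> 'v) \<Rightarrow> ('n::finite \<Rightarrow> 'e \<Rightarrow> int) \<Rightarrow> bool" where
  "H1_basis V E src tgt gs \<longleftrightarrow> (\<forall>i. gs i \<in> H1 V E src tgt) \<and>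
     (\<forall>c\<in>H1 V E src tgt. \<exists>!k::'n \<Rightarrow> int. c = (\<lambda>e. \<Sum>i\<in>UNIV. k i * gs i e))"

text \<open>Coordinates: a Z-basis gs of H_1 identifies H^1(Gamma,G_m) = Hom(H_1,G_m) with G_m^n
  via x \<mapsto> (prod_e x_e^{<gs i, e>})_i, and H^1(Gamma,R) with R^n, H^1(Gamma,Z) with Z^n.
  sigma_b(gamma) = class of (b_e^{<gamma,e>})_e thus has coordinates below.\<close>
definition sigma_coords :: "'e set \<Rightarrow> ('e \<Rightarrow> 'f::field) \<Rightarrow> ('n::finite \<Rightarrow> 'e \<Rightarrow> int) \<Rightarrow> ('e \<Rightarrow> int) \<Rightarrow> 'f ^ 'n" where
  "sigma_coords E b gs c = (\<chi> i. \<Prod>e\<in>E. b e powi (c e * gs i e))"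

definition fibre_lattice :: "'v set \<Rightarrow> 'e set \<Rightarrow> ('e \<Rightarrow> 'v) \<Rightarrow> ('e \<Rightarrow> 'v) \<Rightarrow> ('e \<Rightarrow> 'f::field) \<Rightarrow> ('n::finite \<Rightarrow> 'e \<Rightarrow> int) \<Rightarrow> ('f ^ 'n) set" where
  "fibre_lattice V E src tgt b gs = sigma_coords E b gs ` H1 V E src tgt"

text \<open>log|Y| in R^n; trop(G_m^n / Y) = R^n / log|Y|.\<close>
definition trop_lattice :: "('f::field \<Rightarrow> real) \<Rightarrow> ('f ^ 'n::finite) set \<Rightarrow> (real ^ 'n) set" where
  "trop_lattice av Y = (\<lambda>y. \<chi> i. loga av (y $ i)) ` Y"

text \<open>tau_w(H_1) in H^1(Gamma,R) = R^n (coordinates w.r.t. the basis hs).\<close>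
definition jacobian_lattice :: "'v set \<Rightarrow> 'e set \<Rightarrow> ('e \<Rightarrow> 'v) \<Rightarrow> ('e \<Rightarrow> 'v) \<Rightarrow> ('e \<Rightarrow> rat) \<Rightarrow> ('n::finite \<Rightarrow> 'e \<Rightarrow> int) \<Rightarrow> (real ^ 'n) set" where
  "jacobian_lattice V E src tgt w hs =
     (\<lambda>c. \<chi> i. \<Sum>e\<in>E. real_of_rat (w e) * real_of_int (c e) * real_of_int (hs i e)) ` H1 V E src tgt"

text \<open>A measure-preserving isomorphism of real tori R^n/L1 ~ R^n/L2 (Lebesgue measure):
  given by a continuous additive bijection of R^n carrying L1 onto L2 (hence inducing
  an isomorphism of the quotient groups) which preserves Lebesgue measure.\<close>
definition torus_mp_iso :: "(real ^ 'n::finite) set \<Rightarrow> (real ^ 'n) set \<Rightarrow> bool" where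
  "torus_mp_iso L1 L2 \<longleftrightarrow> (\<exists>f :: real ^ 'n \<Rightarrow> real ^ 'n.
      continuous_on UNIV f \<and> (\<forall>x y. f (x + y) = f x + f y) \<and> bij f \<and> f ` L1 = L2 \<and>
      f \<in> borel_measurable lborel \<and> distr lborel lborel f = lborel)"

end

theory Submission
  imports Defs
begin

text \<open>Write \<open>|x| = q^(-v(x))\<close> with \<open>v\<close> the normalised valuation. In the coordinates given by
  a basis \<open>g\<^sub>i\<close> of \<open>H\<^sub>1(\<Gamma>,\<int>)\<close>, the vector \<open>log|\<sigma>\<^sub>b(\<gamma>)|\<close> has \<open>i\<close>-th entry
  \<open>-\<Sum>\<^sub>e v(b\<^sub>e)\<langle>\<gamma>,e\<rangle>\<langle>g\<^sub>i,e\<rangle>\<close>, which is \<open>\<tau>\<^sub>w(-\<gamma>)\<close> for the weights \<open>w(e) = v(b\<^sub>e) > 0\<close>.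
  As \<open>H\<^sub>1\<close> is stable under \<open>\<gamma> \<mapsto> -\<gamma>\<close>, the lattice \<open>log|Y|\<close> is literally \<open>\<tau>\<^sub>w(H\<^sub>1)\<close>, so
  \<open>\<Gamma>\<^sub>b = \<Gamma>\<close> (relabelled by natural numbers) with \<open>w\<^sub>b(e) = v(b\<^sub>e)\<close> works, the
  isomorphism being the identity of \<open>\<real>\<^sup>n\<close>.\<close>

definition relabel_chain :: "'e set \<Rightarrow> ('e \<Rightarrow> 'd) \<Rightarrow> ('e \<Rightarrow> int) \<Rightarrow> 'd \<Rightarrow> int" where
  "relabel_chain E \<phi> c = (\<lambda>d. if d \<in> \<phi> ` E then c (inv_into E \<phi> d) else 0)"

definition relabel_endpoint :: "'e set \<Rightarrow> ('e \<Rightarrow> 'd) \<Rightarrow> ('v \<Rightarrow> 'u) \<Rightarrow> ('e \<Rightarrow> 'v) \<Rightarrow> 'd \<Rightarrow> 'u" where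
  "relabel_endpoint E \<phi> \<psi> f = (\<lambda>d. \<psi> (f (inv_into E \<phi> d)))"

lemma relabel_chain_apply: "inj_on \<phi> E \<Longrightarrow> e \<in> E \<Longrightarrow> relabel_chain E \<phi> c (\<phi> e) = c e"
  by (simp add: relabel_chain_def)

lemma relabel_chain_outside: "d \<notin> \<phi> ` E \<Longrightarrow> relabel_chain E \<phi> c d = 0"
  by (simp add: relabel_chain_def)

lemma relabel_chain_lincomb:
  "relabel_chain E \<phi> (\<lambda>e. \<Sum>i\<in>I. k i * g i e) = (\<lambda>d. \<Sum>i\<in>I. k i * relabel_chain E \<phi> (g i) d)"
  by (auto simp: relabel_chain_def)

lemma relabel_chain_eqD:
  assumes "inj_on \<phi> E" "relabel_chain E \<phi> c = relabel_chain E \<phi> c'"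
    and "\<forall>e. e \<notin> E \<longrightarrow> c e = 0" "\<forall>e. e \<notin> E \<longrightarrow> c' e = 0"
  shows "c = c'"
proof
  fix e
  show "c e = c' e"
  proof (cases "e \<in> E")
    case True
    then show ?thesis
      using assms(1,2) by (metis relabel_chain_apply)
  qed (use assms in auto)
qed

lemma relabel_chain_restrict:
  assumes "inj_on \<phi> E" "\<forall>d. d \<notin> \<phi> ` E \<longrightarrow> c d = 0"
  shows "c = relabel_chain E \<phi> (\<lambda>e. if e \<in> E then c (\<phi> e) else 0)"
  using assms by (auto simp: relabel_chain_def f_inv_into_f inv_into_into)

lemma relabel_endpoint_apply: "inj_on \<phi> E \<Longrightarrow> e \<in> E \<Longrightarrow> relabel_endpoint E \<phi> \<psi> f (\<phi> e) = \<psi> (f e)"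
  by (simp add: relabel_endpoint_def)

lemma finite_graph_relabel:
  assumes "finite_graph V E src tgt"
  shows "finite_graph (\<psi> ` V) (\<phi> ` E) (relabel_endpoint E \<phi> \<psi> src) (relabel_endpoint E \<phi> \<psi> tgt)"
  using assms by (auto simp: finite_graph_def relabel_endpoint_def inv_into_into)

lemma relabel_incidence_sum:
  assumes "inj_on \<phi> E" "inj_on \<psi> V" "\<forall>e\<in>E. f e \<in> V" "v \<in> V"
  shows "(\<Sum>d\<in>{d \<in> \<phi> ` E. relabel_endpoint E \<phi> \<psi> f d = \<psi> v}. relabel_chain E \<phi> c d)
       = (\<Sum>e\<in>{e\<in>E. f e = v}. c e)"
proof -
  have "{d \<in> \<phi> ` E. relabel_endpoint E \<phi> \<psi> f d = \<psi> v} = \<phi> ` {e\<in>E. f e = v}"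
    using assms by (auto simp: relabel_endpoint_apply inj_on_def)
  moreover have "inj_on \<phi> {e\<in>E. f e = v}"
    using assms(1) by (rule inj_on_subset) blast
  ultimately show ?thesis
    using assms(1) by (simp add: sum.reindex relabel_chain_apply)
qed

lemma relabel_chain_mem_H1_iff:
  assumes "finite_graph V E src tgt" "inj_on \<phi> E" "inj_on \<psi> V"
    and "\<forall>e. e \<notin> E \<longrightarrow> c e = 0"
  shows "relabel_chain E \<phi> c \<in> H1 (\<psi> ` V) (\<phi> ` E) (relabel_endpoint E \<phi> \<psi> src) (relabel_endpoint E \<phi> \<psi> tgt)
    \<longleftrightarrow> c \<in> H1 V E src tgt"
proof -
  have "\<forall>e\<in>E. src e \<in> V" "\<forall>e\<in>E. tgt e \<in> V"
    using assms(1) by (auto simp: finite_graph_def)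
  then show ?thesis
    using assms(2-4) by (auto simp: H1_def relabel_chain_outside relabel_incidence_sum)
qed

lemma H1_relabel:
  assumes "finite_graph V E src tgt" "inj_on \<phi> E" "inj_on \<psi> V"
  shows "H1 (\<psi> ` V) (\<phi> ` E) (relabel_endpoint E \<phi> \<psi> src) (relabel_endpoint E \<phi> \<psi> tgt)
    = relabel_chain E \<phi> ` H1 V E src tgt"
    (is "?H1' = _")
proof
  show "relabel_chain E \<phi> ` H1 V E src tgt \<subseteq> ?H1'"
    using relabel_chain_mem_H1_iff[OF assms] by (auto simp: H1_def)
next
  show "?H1' \<subseteq> relabel_chain E \<phi> ` H1 V E src tgt"
  proof
    fix d
    assume d: "d \<in> ?H1'"
    define c where "c = (\<lambda>e. if e \<in> E then d (\<phi> e) else 0)"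
    have "d = relabel_chain E \<phi> c"
      unfolding c_def using assms(2) d by (intro relabel_chain_restrict) (auto simp: H1_def)
    moreover have "c \<in> H1 V E src tgt"
      using relabel_chain_mem_H1_iff[OF assms, of c] d \<open>d = relabel_chain E \<phi> c\<close>
      by (simp add: c_def)
    ultimately show "d \<in> relabel_chain E \<phi> ` H1 V E src tgt"
      by blast
  qed
qed

lemma finite_graph_nat_relabelling:
  fixes V :: "'v set" and E :: "'e set"
  assumes "finite_graph V E src tgt"
  obtains Vb :: "nat set" and \<phi> :: "'e \<Rightarrow> nat" and srcb tgtb :: "nat \<Rightarrow> nat"
  where "finite_graph Vb (\<phi> ` E) srcb tgtb" "inj_on \<phi> E"
    and "H1 Vb (\<phi> ` E) srcb tgtb = relabel_chain E \<phi> ` H1 V E src tgt"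
proof -
  have "finite E" "finite V"
    using assms by (auto simp: finite_graph_def)
  obtain \<phi> :: "'e \<Rightarrow> nat" where \<phi>: "inj_on \<phi> E"
    using finite_imp_inj_to_nat_seg[OF \<open>finite E\<close>] by blast
  obtain \<psi> :: "'v \<Rightarrow> nat" where \<psi>: "inj_on \<psi> V"
    using finite_imp_inj_to_nat_seg[OF \<open>finite V\<close>] by blast
  show ?thesis
    by (rule that[OF finite_graph_relabel[OF assms] \<phi> H1_relabel[OF assms \<phi> \<psi>]])
qed

lemma H1_basis_relabel:
  assumes inj: "inj_on \<phi> E"
    and H1_eq: "H1 V' (\<phi> ` E) src' tgt' = relabel_chain E \<phi> ` H1 V E src tgt"
    and basis: "H1_basis V E src tgt (gs :: 'n::finite \<Rightarrow> 'e \<Rightarrow> int)"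
  shows "H1_basis V' (\<phi> ` E) src' tgt' (\<lambda>i. relabel_chain E \<phi> (gs i))"
  unfolding H1_basis_def
proof (intro conjI allI ballI)
  fix i
  show "relabel_chain E \<phi> (gs i) \<in> H1 V' (\<phi> ` E) src' tgt'"
    using basis H1_eq by (auto simp: H1_basis_def)
next
  fix d
  assume "d \<in> H1 V' (\<phi> ` E) src' tgt'"
  then obtain c where c: "c \<in> H1 V E src tgt" and d: "d = relabel_chain E \<phi> c"
    using H1_eq by blast
  have supported: "\<forall>e. e \<notin> E \<longrightarrow> c' e = 0" if "c' \<in> H1 V E src tgt" for c'
    using that by (simp add: H1_def)
  have combination_in_H1: "(\<lambda>e. \<Sum>i\<in>UNIV. k i * gs i e) \<in> H1 V E src tgt" for k
    using basis by (auto simp: H1_basis_def H1_def sum.swap[of _ UNIV] sum_distrib_left[symmetric])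
  have "d = (\<lambda>e. \<Sum>i\<in>UNIV. k i * relabel_chain E \<phi> (gs i) e) \<longleftrightarrow> c = (\<lambda>e. \<Sum>i\<in>UNIV. k i * gs i e)"
    for k
    unfolding d relabel_chain_lincomb[symmetric]
    using relabel_chain_eqD[OF inj] supported[OF c] supported[OF combination_in_H1] by blast
  moreover have "\<exists>!k. c = (\<lambda>e. \<Sum>i\<in>UNIV. k i * gs i e)"
    using basis c by (simp add: H1_basis_def)
  ultimately show "\<exists>!k. d = (\<lambda>e. \<Sum>i\<in>UNIV. k i * relabel_chain E \<phi> (gs i) e)"
    by simp
qed

lemma jacobian_lattice_relabel:
  assumes inj: "inj_on \<phi> E"
    and H1_eq: "H1 V' (\<phi> ` E) src' tgt' = relabel_chain E \<phi> ` H1 V E src tgt"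
  shows "jacobian_lattice V' (\<phi> ` E) src' tgt' (\<lambda>d. w (inv_into E \<phi> d)) (\<lambda>i. relabel_chain E \<phi> (hs i))
    = jacobian_lattice V E src tgt w hs"
proof -
  have "(\<Sum>d\<in>\<phi> ` E. real_of_rat (w (inv_into E \<phi> d)) * real_of_int (relabel_chain E \<phi> c d)
            * real_of_int (relabel_chain E \<phi> (hs i) d))
      = (\<Sum>e\<in>E. real_of_rat (w e) * real_of_int (c e) * real_of_int (hs i e))" for c i
    using inj by (simp add: sum.reindex relabel_chain_apply)
  then show ?thesis
    unfolding jacobian_lattice_def H1_eq image_image by simp
qed

lemma uminus_image_H1: "uminus ` H1 V E src tgt = H1 V E src tgt"
proof -
  have minus_mem: "- c \<in> H1 V E src tgt" if "c \<in> H1 V E src tgt" for c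
    using that by (auto simp: H1_def sum_negf)
  show ?thesis
    using minus_mem by (force intro: image_eqI[of _ uminus, OF minus_minus[symmetric]])
qed

text \<open>The floor is exact because \<open>loga av x \<in> \<int>\<close> for \<open>x \<noteq> 0\<close> (\<open>loga_in_Ints\<close>);
  at \<open>x = 0\<close> the junk value \<open>loga av 0 = 0\<close> gives \<open>valuation av 0 = 0\<close>.\<close>
definition valuation :: "('f::field \<Rightarrow> real) \<Rightarrow> 'f \<Rightarrow> int" where
  "valuation av x = - \<lfloor>loga av x\<rfloor>"

lemma nonarch_local_field_abs_one:
  assumes "nonarch_local_field av"
  shows "av 1 = 1"
proof -
  have "av 1 = av 1 * av 1" "av 1 \<noteq> 0"
    using assms unfolding nonarch_local_field_def by (metis mult_1, simp)
  then show ?thesis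
    by simp
qed

lemma loga_one: "nonarch_local_field av \<Longrightarrow> loga av 1 = 0"
  by (simp add: loga_def nonarch_local_field_abs_one)

lemma loga_mult:
  assumes "nonarch_local_field av" "x \<noteq> 0" "y \<noteq> 0"
  shows "loga av (x * y) = loga av x + loga av y"
  using assms by (simp add: loga_def log_mult nonarch_local_field_def)

lemma loga_inverse:
  assumes "nonarch_local_field av" "x \<noteq> 0"
  shows "loga av (inverse x) = - loga av x"
  using loga_mult[OF assms(1), of "inverse x" x] assms by (simp add: loga_one)

lemma loga_power: "nonarch_local_field av \<Longrightarrow> x \<noteq> 0 \<Longrightarrow> loga av (x ^ n) = of_nat n * loga av x"
  by (induction n) (simp_all add: loga_one loga_mult algebra_simps)

lemma loga_power_int:
  "nonarch_local_field av \<Longrightarrow> x \<noteq> 0 \<Longrightarrow> loga av (x powi n) = of_int n * loga av x"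
  by (simp add: power_int_def loga_power loga_inverse)

lemma loga_prod:
  assumes "nonarch_local_field av" "\<forall>e\<in>E. b e \<noteq> 0"
  shows "loga av (\<Prod>e\<in>E. b e) = (\<Sum>e\<in>E. loga av (b e))"
  using assms(2)
  by (induction E rule: infinite_finite_induct) (simp_all add: loga_one loga_mult assms(1))

lemma nonarch_local_field_abs_eq_powr:
  assumes "nonarch_local_field av" "x \<noteq> 0"
  obtains k :: int where "av x = residue_card av powr of_int k"
proof -
  have "av ` (UNIV - {0}) = range (\<lambda>k::int. residue_card av powr of_int k)"
    using assms(1) by (simp add: nonarch_local_field_def)
  then have "av x \<in> range (\<lambda>k::int. residue_card av powr of_int k)"
    using assms(2) by blast
  then show ?thesis
    using that by blast
qed

lemma loga_in_Ints:
  assumes "nonarch_local_field av" "x \<noteq> 0"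
  shows "loga av x \<in> \<int>"
proof -
  obtain k :: int where k: "av x = residue_card av powr of_int k"
    using nonarch_local_field_abs_eq_powr[OF assms] .
  have "residue_card av \<noteq> 0"
    using k assms by (auto simp: nonarch_local_field_def)
  moreover have "residue_card av \<ge> 0"
    by (simp add: residue_card_def)
  ultimately show ?thesis
    using k by (cases "residue_card av = 1") (simp_all add: loga_def)
qed

lemma loga_eq_valuation:
  assumes "nonarch_local_field av" "x \<noteq> 0"
  shows "loga av x = - of_int (valuation av x)"
proof -
  obtain k :: int where "loga av x = of_int k"
    using loga_in_Ints[OF assms] by (elim Ints_cases)
  then show ?thesis
    by (simp add: valuation_def)
qed

lemma valuation_pos:
  assumes "nonarch_local_field av" "x \<noteq> 0" "av x < 1"
  shows "0 < valuation av x"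
proof -
  obtain k :: int where k: "av x = residue_card av powr of_int k"
    using nonarch_local_field_abs_eq_powr[OF assms(1,2)] .
  have "av x > 0"
    using assms(1,2) by (auto simp: nonarch_local_field_def order_le_less)
  then have "residue_card av \<noteq> 0" "residue_card av \<noteq> 1"
    using k assms(3) by auto
  then have "residue_card av > 1"
    by (auto simp: residue_card_def)
  then have "loga av x < 0"
    using \<open>av x > 0\<close> assms(3) by (simp add: loga_def)
  then show ?thesis
    using loga_eq_valuation[OF assms(1,2)] by simp
qed

lemma trop_fibre_lattice_eq_jacobian_lattice:
  assumes nl: "nonarch_local_field av" and nonzero: "\<forall>e\<in>E. b e \<noteq> 0"
  shows "trop_lattice av (fibre_lattice V E src tgt b gs)
    = jacobian_lattice V E src tgt (\<lambda>e. of_int (valuation av (b e))) gs"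
proof -
  let ?\<tau> = "\<lambda>c. \<chi> i. \<Sum>e\<in>E. real_of_rat (of_int (valuation av (b e))) * real_of_int (c e) * real_of_int (gs i e)"
  have "loga av (\<Prod>e\<in>E. b e powi (c e * gs i e))
      = (\<Sum>e\<in>E. real_of_rat (of_int (valuation av (b e))) * real_of_int (- c e) * real_of_int (gs i e))"
    for c i
  proof -
    have "loga av (\<Prod>e\<in>E. b e powi (c e * gs i e)) = (\<Sum>e\<in>E. loga av (b e powi (c e * gs i e)))"
      using nonzero by (simp add: loga_prod[OF nl])
    also have "\<dots> = (\<Sum>e\<in>E. of_int (c e * gs i e) * loga av (b e))"
      using nonzero by (intro sum.cong) (simp_all add: loga_power_int[OF nl])
    also have "\<dots> = (\<Sum>e\<in>E. real_of_rat (of_int (valuation av (b e))) * real_of_int (- c e) * real_of_int (gs i e))"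
      using nonzero by (intro sum.cong) (simp_all add: loga_eq_valuation[OF nl])
    finally show ?thesis .
  qed
  then have "trop_lattice av (fibre_lattice V E src tgt b gs) = ?\<tau> ` uminus ` H1 V E src tgt"
    unfolding trop_lattice_def fibre_lattice_def image_image
    by (intro image_cong refl) (simp add: sigma_coords_def vec_eq_iff)
  then show ?thesis
    unfolding uminus_image_H1 jacobian_lattice_def .
qed

lemma torus_mp_iso_refl: "torus_mp_iso L L"
  unfolding torus_mp_iso_def
proof (intro exI[of _ id] conjI)
  show "distr lborel lborel id = lborel"
    by (simp add: id_def)
qed (simp_all add: continuous_on_id)

theorem proposition4p2:
  fixes av :: "'f::field \<Rightarrow> real"
    and V :: "'v set" and E :: "'e set" and src tgt :: "'e \<Rightarrow> 'v"
    and gs :: "'n::finite \<Rightarrow> 'e \<Rightarrow> int"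
    and b :: "'e \<Rightarrow> 'f"
  assumes "nonarch_local_field av"
    and "finite_graph V E src tgt"
    and "H1_basis V E src tgt gs"
    and "\<forall>e\<in>E. b e \<in> maximal_ideal av \<and> b e \<noteq> 0"
  shows "\<exists>(Vb :: nat set) (Eb :: nat set) (srcb :: nat \<Rightarrow> nat) (tgtb :: nat \<Rightarrow> nat)
            (wb :: nat \<Rightarrow> rat) (hs :: 'n \<Rightarrow> nat \<Rightarrow> int).
           finite_graph Vb Eb srcb tgtb \<and> (\<forall>e\<in>Eb. 0 < wb e) \<and>
           H1_basis Vb Eb srcb tgtb hs \<and>
           torus_mp_iso (trop_lattice av (fibre_lattice V E src tgt b gs))
                        (jacobian_lattice Vb Eb srcb tgtb wb hs)"
proof -
  obtain Vb :: "nat set" and \<phi> :: "'e \<Rightarrow> nat" and srcb tgtb :: "nat \<Rightarrow> nat"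
    where graph: "finite_graph Vb (\<phi> ` E) srcb tgtb" and \<phi>: "inj_on \<phi> E"
    and H1_eq: "H1 Vb (\<phi> ` E) srcb tgtb = relabel_chain E \<phi> ` H1 V E src tgt"
    using finite_graph_nat_relabelling[OF assms(2)] .
  define wb where "wb = (\<lambda>d. of_int (valuation av (b (inv_into E \<phi> d))) :: rat)"
  define hs where "hs = (\<lambda>i. relabel_chain E \<phi> (gs i))"
  have "\<forall>d\<in>\<phi> ` E. 0 < wb d"
    using assms(1,4) \<phi> by (auto simp: wb_def maximal_ideal_def valuation_pos)
  moreover have "H1_basis Vb (\<phi> ` E) srcb tgtb hs"
    unfolding hs_def using \<phi> H1_eq assms(3) by (rule H1_basis_relabel)
  moreover have "torus_mp_iso (trop_lattice av (fibre_lattice V E src tgt b gs))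
      (jacobian_lattice Vb (\<phi> ` E) srcb tgtb wb hs)"
  proof -
    have "trop_lattice av (fibre_lattice V E src tgt b gs)
        = jacobian_lattice V E src tgt (\<lambda>e. of_int (valuation av (b e))) gs"
      using assms(1,4) by (simp add: trop_fibre_lattice_eq_jacobian_lattice)
    also have "\<dots> = jacobian_lattice Vb (\<phi> ` E) srcb tgtb wb hs"
      unfolding wb_def hs_def by (rule jacobian_lattice_relabel[OF \<phi> H1_eq, symmetric])
    finally show ?thesis
      by (simp add: torus_mp_iso_refl)
  qed
  ultimately show ?thesis
    using graph by blast
qed

end
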